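(* Let $\mathbb{K}$ be a non-Archimedean valued field with residue field $\mathfrak{r}$, and let $G$ be a discrete group. Set $R = \mathbb{F}_p$ if $\chi(\mathbb{K}) = p > 0$; $R = \mathbb{Q}$ if $\chi(\mathbb{K}) = \chi(\mathfrak{r}) = 0$; and $R = \mathbb{Z}$ if $\chi(\mathbb{K}) = 0$ and $\chi(\mathfrak{r}) = p > 0$. Let $n\ge 0$. If $H_n(G, R)$ is a finitely generated $R$-module, then the comparison map $c^n : H^n_b(G, \mathbb{K}) \to H^n(G, \mathbb{K})$ is surjective.
   Context: A non-Archimedean valued field is a field with an absolute value satisfying the ultrametric inequality; $\mathfrak{o}=\{|x|_\mathbb{K}\le1\}$, $\mathfrak{m}=\{|x|_\mathbb{K}<1\}$, residue field $\mathfrak{r}=\mathfrak{o}/\mathfrak{m}$, $\chi$ = characteristic. $H_n(G,R)$ is ordinary group homology with trivial coefficients. $\mathbb{K}$ is a trivial $G$-module. Bar resolution: $\overline{C}^0=\mathbb{K}$, $\overline{C}^n(G,\mathbb{K})$ = all maps $G^n\to\mathbb{K}$, $\overline{C}^n_b(G,\mathbb{K})$ = bounded such maps, with $\delta^nf(g_1,\dots,g_{n+1})=f(g_2,\dots,g_{n+1})+\sum_{i=1}^n(-1)^if(g_1,\dots,g_ig_{i+1},\dots,g_{n+1})+(-1)^{n+1}f(g_1,\dots,g_n)$. $H^\bullet(G,\mathbb{K})$ and $H^\bullet_b(G,\mathbb{K})$ are their cohomologies; the comparison map $c^n$ is induced by inclusion. *)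

theory Defs
  imports Complex_Main "HOL-Algebra.Group"
begin

definition nonarch_abs :: "('k::field \<Rightarrow> real) \<Rightarrow> bool" where
  "nonarch_abs av \<longleftrightarrow>
     (\<forall>x. 0 \<le> av x) \<and> (\<forall>x. av x = 0 \<longleftrightarrow> x = 0) \<and>
     (\<forall>x y. av (x * y) = av x * av y) \<and>
     (\<forall>x y. av (x + y) \<le> max (av x) (av y))"

text \<open>Characteristic of the residue field o/m: the generator of the kernel of
  Z -> o/m, i.e. the least n > 0 with n*1 in m (note n*1 is always in o), or 0.\<close>
definition res_char :: "('k::field \<Rightarrow> real) \<Rightarrow> nat" where
  "res_char av = (if \<exists>n>0. av (of_nat n :: 'k) < 1
                  then (LEAST n. n > 0 \<and> av (of_nat n :: 'k) < 1) else 0)"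

definition tuples :: "('g,'b) monoid_scheme \<Rightarrow> nat \<Rightarrow> 'g list set" where
  "tuples G m = {xs. length xs = m \<and> set xs \<subseteq> carrier G}"

definition face :: "('g,'b) monoid_scheme \<Rightarrow> nat \<Rightarrow> nat \<Rightarrow> 'g list \<Rightarrow> 'g list" where
  "face G m i xs =
     (if i = 0 then tl xs
      else if i = m then butlast xs
      else take (i - 1) xs @ [xs ! (i - 1) \<otimes>\<^bsub>G\<^esub> xs ! i] @ drop (i + 1) xs)"

definition cochain :: "('g,'b) monoid_scheme \<Rightarrow> nat \<Rightarrow> ('g list \<Rightarrow> 'k::field) \<Rightarrow> bool" where
  "cochain G n f \<longleftrightarrow> (\<forall>xs. xs \<notin> tuples G n \<longrightarrow> f xs = 0)"

definition bounded_cochain :: "('k::field \<Rightarrow> real) \<Rightarrow> ('g list \<Rightarrow> 'k) \<Rightarrow> bool" where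
  "bounded_cochain av f \<longleftrightarrow> (\<exists>B. \<forall>xs. av (f xs) \<le> B)"

definition cobdry :: "('g,'b) monoid_scheme \<Rightarrow> nat \<Rightarrow> ('g list \<Rightarrow> 'k::field) \<Rightarrow> 'g list \<Rightarrow> 'k" where
  "cobdry G n f xs =
     (if xs \<in> tuples G (Suc n)
      then (\<Sum>i\<in>{0..Suc n}. (-1) ^ i * f (face G (Suc n) i xs)) else 0)"

text \<open>Surjectivity of the comparison map c^n : H^n_b(G,K) -> H^n(G,K): every
  ordinary n-cocycle is cohomologous (in the ordinary complex) to a bounded cocycle.\<close>
definition comparison_surj :: "('k::field \<Rightarrow> real) \<Rightarrow> ('g,'b) monoid_scheme \<Rightarrow> nat \<Rightarrow> bool" where
  "comparison_surj av G n \<longleftrightarrow>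
     (\<forall>f::'g list \<Rightarrow> 'k. cochain G n f \<and> cobdry G n f = (\<lambda>_. 0) \<longrightarrow>
        (\<exists>b. cochain G n b \<and> bounded_cochain av b \<and> cobdry G n b = (\<lambda>_. 0) \<and>
             (if n = 0 then f = b
              else (\<exists>h. cochain G (n - 1) h \<and> (\<lambda>xs. f xs - b xs) = cobdry G (n - 1) h))))"

definition chain :: "('g,'b) monoid_scheme \<Rightarrow> nat \<Rightarrow> ('g list \<Rightarrow> 'r::comm_ring_1) \<Rightarrow> bool" where
  "chain G n c \<longleftrightarrow> finite {xs. c xs \<noteq> 0} \<and> {xs. c xs \<noteq> 0} \<subseteq> tuples G n"

definition bdry :: "('g,'b) monoid_scheme \<Rightarrow> nat \<Rightarrow> ('g list \<Rightarrow> 'r::comm_ring_1) \<Rightarrow> 'g list \<Rightarrow> 'r" where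
  "bdry G n c ys =
     (\<Sum>xs\<in>{xs. c xs \<noteq> 0}. c xs * (\<Sum>i\<in>{i. i \<le> n \<and> face G n i xs = ys}. (-1) ^ i))"

definition cycle :: "('g,'b) monoid_scheme \<Rightarrow> nat \<Rightarrow> ('g list \<Rightarrow> 'r::comm_ring_1) \<Rightarrow> bool" where
  "cycle G n z \<longleftrightarrow> chain G n z \<and> (n = 0 \<or> bdry G n z = (\<lambda>_. 0))"

text \<open>H_n(G,R) = Z_n / B_n is a finitely generated R-module: finitely many cycles
  generate all cycles modulo boundaries of (n+1)-chains.\<close>
definition homology_fg :: "'r::comm_ring_1 itself \<Rightarrow> ('g,'b) monoid_scheme \<Rightarrow> nat \<Rightarrow> bool" where
  "homology_fg _ G n \<longleftrightarrow>
     (\<exists>F::('g list \<Rightarrow> 'r) set. finite F \<and> (\<forall>z\<in>F. cycle G n z) \<and>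
        (\<forall>z. cycle G n z \<longrightarrow>
           (\<exists>a d. chain G (Suc n) d \<and>
              z = (\<lambda>xs. (\<Sum>w\<in>F. a w * w xs) + bdry G (Suc n) d xs))))"

end

theory Submission
  imports Defs "HOL-Number_Theory.Residues"
begin

text \<open>Let \<open>\<iota>\<close> be the injective ring map from \<open>R\<close> (\<open>\<int>/p\<close>, \<open>\<rat>\<close> or \<open>\<int>\<close>) into the
  valuation ring of \<open>K\<close>, and \<open>f\<close> an \<open>n\<close>-cocycle. Paired with \<open>R\<close>-chains through \<open>\<iota>\<close>, \<open>f\<close>
  vanishes on boundaries, so on cycles it only sees the finitely many generators of \<open>H\<^sub>n(G, R)\<close>;
  as \<open>|\<iota> r| \<le> 1\<close> and the absolute value is ultrametric, \<open>f\<close> is bounded on all cycles. Since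
  \<open>R\<close> is a principal ideal domain, the boundaries in degree \<open>n - 1\<close> have a triangular
  generating system (for a well-order of the tuples), which yields an \<open>(n - 1)\<close>-cochain \<open>h\<close>
  such that \<open>f - \<delta>h\<close> evaluated at a tuple \<open>t\<close> is \<open>f\<close> paired with a cycle. Hence \<open>f - \<delta>h\<close>
  is a bounded cocycle cohomologous to \<open>f\<close>.\<close>

section \<open>The simplicial structure of the bar complex\<close>

lemma length_face:
  assumes "length xs = N" "i \<le> N" "N \<ge> 1"
  shows "length (face G N i xs) = N - 1"
  using assms by (auto simp: face_def)

lemma nth_face:
  assumes "length xs = N" "i \<le> N" "l < N - 1"
  shows "face G N i xs ! l =
    (if i = 0 then xs ! Suc l else if Suc l < i then xs ! l
     else if Suc l = i then xs ! l \<otimes>\<^bsub>G\<^esub> xs ! Suc l else xs ! Suc l)"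
proof -
  consider "i = 0" | "i = N" "i \<noteq> 0" | "0 < i" "i < N"
    using assms(2) by linarith
  then show ?thesis
  proof cases
    case 2
    then have "Suc l < N"
      using assms by linarith
    with 2 show ?thesis
      using assms by (simp add: face_def nth_butlast)
  qed (use assms in \<open>auto simp: face_def nth_tl nth_append min_def\<close>)
qed

lemma face_in_tuples:
  assumes "group G" "xs \<in> tuples G (Suc m)" "i \<le> Suc m"
  shows "face G (Suc m) i xs \<in> tuples G m"
proof -
  interpret group G by fact
  have len: "length xs = Suc m" and xs: "set xs \<subseteq> carrier G"
    using assms(2) by (auto simp: tuples_def)
  have "face G (Suc m) i xs ! l \<in> carrier G" if "l < m" for l
  proof -
    have "xs ! l \<in> carrier G" "xs ! Suc l \<in> carrier G"
      using that len xs nth_mem[of l xs] nth_mem[of "Suc l" xs] by auto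
    then show ?thesis
      using nth_face[OF len assms(3), of l G] that by auto
  qed
  then show ?thesis
    using length_face[OF len assms(3)] by (auto simp: tuples_def set_conv_nth)
qed

text \<open>Only the case \<open>j = i + 1\<close> uses associativity.\<close>
lemma face_face:
  assumes "group G" "xs \<in> tuples G (Suc (Suc k))" "i < j" "j \<le> Suc (Suc k)"
  shows "face G (Suc k) i (face G (Suc (Suc k)) j xs) =
         face G (Suc k) (j - 1) (face G (Suc (Suc k)) i xs)"
proof -
  interpret group G by fact
  let ?dj = "face G (Suc (Suc k)) j xs" and ?di = "face G (Suc (Suc k)) i xs"
  have len: "length xs = Suc (Suc k)"
    using assms(2) by (simp add: tuples_def)
  have carrier: "xs ! l \<in> carrier G" if "l < Suc (Suc k)" for l
    using assms(2) that by (auto simp: tuples_def)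
  have len_dj: "length ?dj = Suc k" and len_di: "length ?di = Suc k"
    using length_face[OF len assms(4)] length_face[OF len, of i] assms(3,4) by auto
  show ?thesis
  proof (rule nth_equalityI)
    show "length (face G (Suc k) i ?dj) = length (face G (Suc k) (j - 1) ?di)"
      using assms by (simp add: length_face len_dj len_di)
  next
    fix l
    assume "l < length (face G (Suc k) i ?dj)"
    then have l: "l < k"
      using length_face[OF len_dj, of i G] assms by simp
    obtain j' where j: "j = Suc j'"
      using assms(3) by (cases j) auto
    note lhs = nth_face[OF len_dj, of i l G] and rhs = nth_face[OF len_di, of "j - 1" l G]
    note dj = nth_face[OF len assms(4), of _ G] and di = nth_face[OF len, of i _ G]
    have c: "xs ! l \<in> carrier G" "xs ! Suc l \<in> carrier G" "xs ! Suc (Suc l) \<in> carrier G"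
      using carrier l by auto
    show "face G (Suc k) i ?dj ! l = face G (Suc k) (j - 1) ?di ! l"
    proof (cases "Suc l = i \<and> Suc l = j'")
      case True
      then show ?thesis
        using lhs rhs dj[of l] dj[of "Suc l"] di[of l] di[of "Suc l"] assms l j c
        by (simp add: m_assoc)
    next
      case False
      then show ?thesis
        using lhs rhs dj[of l] dj[of "Suc l"] di[of l] di[of "Suc l"] assms l j by auto
    qed
  qed
qed

text \<open>Splitting the double sum at \<open>i < j\<close> and reindexing one half by the simplicial identity
  cancels it against the other.\<close>
lemma cobdry_cobdry:
  fixes \<phi> :: "'g list \<Rightarrow> 'k::field"
  assumes G: "group G"
  shows "cobdry G (Suc k) (cobdry G k \<phi>) xs = 0"
proof (cases "xs \<in> tuples G (Suc (Suc k))")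
  case False
  then show ?thesis by (simp add: cobdry_def)
next
  case True
  define t where "t = (\<lambda>(j, i). (-1::'k) ^ j * ((-1) ^ i * \<phi> (face G (Suc k) i (face G (Suc (Suc k)) j xs))))"
  define S where "S = {0..Suc (Suc k)} \<times> {0..Suc k}"
  define P1 where "P1 = {p \<in> S. snd p < fst p}"
  define P2 where "P2 = {p \<in> S. fst p \<le> snd p}"
  have "cobdry G (Suc k) (cobdry G k \<phi>) xs =
        (\<Sum>j\<in>{0..Suc (Suc k)}. (-1) ^ j * cobdry G k \<phi> (face G (Suc (Suc k)) j xs))"
    using True by (simp add: cobdry_def)
  also have "\<dots> = (\<Sum>j\<in>{0..Suc (Suc k)}. \<Sum>i\<in>{0..Suc k}. t (j, i))"
  proof (rule sum.cong[OF refl])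
    fix j
    assume "j \<in> {0..Suc (Suc k)}"
    then have "face G (Suc (Suc k)) j xs \<in> tuples G (Suc k)"
      using face_in_tuples[OF G True] by simp
    then show "(-1) ^ j * cobdry G k \<phi> (face G (Suc (Suc k)) j xs) = (\<Sum>i\<in>{0..Suc k}. t (j, i))"
      by (simp only: cobdry_def if_True sum_distrib_left t_def case_prod_conv)
  qed
  also have "\<dots> = sum t S"
    unfolding S_def sum.cartesian_product case_prod_eta ..
  also have "\<dots> = sum t P1 + sum t P2"
  proof -
    have "S = P1 \<union> P2" "P1 \<inter> P2 = {}" "finite S"
      by (auto simp: P1_def P2_def S_def)
    then show ?thesis
      by (metis finite_Un sum.union_disjoint)
  qed
  also have "sum t P1 = sum (\<lambda>q. - t q) P2"
  proof (rule sum.reindex_bij_witness[where j = "\<lambda>(j, i). (i, j - 1)" and i = "\<lambda>(a, b). (Suc b, a)"])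
    fix p
    assume "p \<in> P1"
    then obtain j' i where p: "p = (Suc j', i)" "i < Suc j'" "Suc j' \<le> Suc (Suc k)"
      unfolding P1_def S_def by (auto dest: less_imp_Suc_add)
    then show "(\<lambda>(a, b). (Suc b, a)) ((\<lambda>(j, i). (i, j - 1)) p) = p"
      and "(\<lambda>(j, i). (i, j - 1)) p \<in> P2"
      and "- t ((\<lambda>(j, i). (i, j - 1)) p) = t p"
      using face_face[OF G True p(2,3)] by (auto simp: t_def P2_def S_def)
  qed (auto simp: P1_def P2_def S_def)
  finally show ?thesis
    by (simp add: sum_negf)
qed

lemma cobdry_diff: "cobdry G k (\<lambda>t. f t - g t) xs = cobdry G k f xs - cobdry G k g xs"
  by (simp add: cobdry_def sum_subtractf right_diff_distrib)

section \<open>Pairing K-valued cochains with R-valued chains\<close>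

definition is_ring_hom :: "('r::comm_ring_1 \<Rightarrow> 'k::comm_ring_1) \<Rightarrow> bool" where
  "is_ring_hom \<iota> \<longleftrightarrow> (\<forall>a b. \<iota> (a + b) = \<iota> a + \<iota> b) \<and> (\<forall>a b. \<iota> (a * b) = \<iota> a * \<iota> b) \<and> \<iota> 1 = 1"

context
  fixes \<iota> :: "'r::comm_ring_1 \<Rightarrow> 'k::comm_ring_1"
  assumes hom: "is_ring_hom \<iota>"
begin

lemma is_ring_hom_add: "\<iota> (a + b) = \<iota> a + \<iota> b"
  and is_ring_hom_mult: "\<iota> (a * b) = \<iota> a * \<iota> b"
  and is_ring_hom_one: "\<iota> 1 = 1"
  using hom by (simp_all add: is_ring_hom_def)

lemma is_ring_hom_zero: "\<iota> 0 = 0"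
  using is_ring_hom_add[of 0 0] by simp

lemma is_ring_hom_uminus: "\<iota> (- a) = - \<iota> a"
  using is_ring_hom_add[of a "- a"] by (simp add: is_ring_hom_zero eq_neg_iff_add_eq_0 add.commute)

lemma is_ring_hom_diff: "\<iota> (a - b) = \<iota> a - \<iota> b"
  using is_ring_hom_add[of a "- b"] by (simp add: is_ring_hom_uminus)

lemma is_ring_hom_sum: "\<iota> (sum f A) = (\<Sum>x\<in>A. \<iota> (f x))"
  by (induction A rule: infinite_finite_induct) (simp_all add: is_ring_hom_zero is_ring_hom_add)

lemma is_ring_hom_neg_one_power: "\<iota> ((-1) ^ n) = (-1) ^ n"
  by (induction n) (simp_all add: is_ring_hom_one is_ring_hom_mult is_ring_hom_uminus)

end

abbreviation support :: "('x \<Rightarrow> 'r::zero) \<Rightarrow> 'x set" where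
  "support c \<equiv> {x. c x \<noteq> 0}"

definition pairing :: "('r::comm_ring_1 \<Rightarrow> 'k::comm_ring_1) \<Rightarrow> ('x \<Rightarrow> 'k) \<Rightarrow> ('x \<Rightarrow> 'r) \<Rightarrow> 'k" where
  "pairing \<iota> \<phi> c = (\<Sum>x\<in>support c. \<iota> (c x) * \<phi> x)"

definition lincomb :: "'a set \<Rightarrow> ('a \<Rightarrow> 'r::comm_ring_1) \<Rightarrow> ('a \<Rightarrow> 'x \<Rightarrow> 'r) \<Rightarrow> 'x \<Rightarrow> 'r" where
  "lincomb A m V = (\<lambda>x. \<Sum>a\<in>A. m a * V a x)"

definition elementary_chain :: "'x \<Rightarrow> 'x \<Rightarrow> 'r::comm_ring_1" where
  "elementary_chain t x = (if x = t then 1 else 0)"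

lemma support_diff: "support (\<lambda>x. c x - c' x) \<subseteq> support c \<union> support (c' :: 'x \<Rightarrow> 'r::ab_group_add)"
  by auto

lemma support_lincomb: "support (lincomb A m V) \<subseteq> (\<Union>a\<in>A. support (V a))"
  by (auto simp: lincomb_def intro: ccontr[of "_ = 0"] sum.neutral)

lemma lincomb_add_term:
  assumes "finite A"
  shows "(\<lambda>x. q * V b x + lincomb A m V x) =
    lincomb (insert b A) (m(b := q + (if b \<in> A then m b else 0))) V"
proof (cases "b \<in> A")
  case True
  then show ?thesis
    using assms by (auto simp: lincomb_def sum.remove insert_absorb distrib_right add.assoc
        intro!: sum.cong)
next
  case False
  then have "(\<Sum>a\<in>A. (m(b := q)) a * V a x) = (\<Sum>a\<in>A. m a * V a x)" for x
    by (intro sum.cong) auto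
  with False assms show ?thesis
    by (simp add: lincomb_def)
qed

lemma pairing_eq_sum:
  assumes "is_ring_hom \<iota>" "finite S" "support c \<subseteq> S"
  shows "pairing \<iota> \<phi> c = (\<Sum>x\<in>S. \<iota> (c x) * \<phi> x)"
  unfolding pairing_def using assms by (intro sum.mono_neutral_left) (auto simp: is_ring_hom_zero)

lemma pairing_cong: "(\<And>x. c x \<noteq> 0 \<Longrightarrow> \<phi> x = \<psi> x) \<Longrightarrow> pairing \<iota> \<phi> c = pairing \<iota> \<psi> c"
  by (simp add: pairing_def)

lemma pairing_zero: "pairing \<iota> \<phi> (\<lambda>_. 0) = 0"
  by (simp add: pairing_def)

lemma pairing_elementary_chain: "is_ring_hom \<iota> \<Longrightarrow> pairing \<iota> \<phi> (elementary_chain t) = \<phi> t"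
  by (simp add: pairing_def elementary_chain_def is_ring_hom_one)

lemma pairing_diff:
  assumes "is_ring_hom \<iota>" "finite (support c)" "finite (support c')"
  shows "pairing \<iota> \<phi> (\<lambda>x. c x - c' x) = pairing \<iota> \<phi> c - pairing \<iota> \<phi> c'"
proof -
  let ?S = "support c \<union> support c'"
  have "pairing \<iota> \<phi> (\<lambda>x. c x - c' x) = (\<Sum>x\<in>?S. \<iota> (c x - c' x) * \<phi> x)"
    "pairing \<iota> \<phi> c = (\<Sum>x\<in>?S. \<iota> (c x) * \<phi> x)" "pairing \<iota> \<phi> c' = (\<Sum>x\<in>?S. \<iota> (c' x) * \<phi> x)"
    using assms by (auto intro!: pairing_eq_sum)
  then show ?thesis
    using assms(1) by (simp add: is_ring_hom_diff left_diff_distrib sum_subtractf)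
qed

lemma pairing_lincomb:
  assumes "is_ring_hom \<iota>" "finite A" "\<And>a. a \<in> A \<Longrightarrow> finite (support (V a))"
  shows "pairing \<iota> \<phi> (lincomb A m V) = (\<Sum>a\<in>A. \<iota> (m a) * pairing \<iota> \<phi> (V a))"
proof -
  let ?S = "\<Union>a\<in>A. support (V a)"
  have S: "finite ?S" "support (lincomb A m V) \<subseteq> ?S"
    using assms support_lincomb[of A m V] by auto
  have "pairing \<iota> \<phi> (lincomb A m V) = (\<Sum>x\<in>?S. \<Sum>a\<in>A. \<iota> (m a) * (\<iota> (V a x) * \<phi> x))"
    using pairing_eq_sum[OF assms(1) S]
    by (simp add: lincomb_def is_ring_hom_sum[OF assms(1)] is_ring_hom_mult[OF assms(1)] sum_distrib_right mult.assoc)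
  also have "\<dots> = (\<Sum>a\<in>A. \<iota> (m a) * (\<Sum>x\<in>?S. \<iota> (V a x) * \<phi> x))"
    by (subst sum.swap) (simp add: sum_distrib_left)
  also have "\<dots> = (\<Sum>a\<in>A. \<iota> (m a) * pairing \<iota> \<phi> (V a))"
  proof (rule sum.cong[OF refl])
    fix a
    assume "a \<in> A"
    then have "pairing \<iota> \<phi> (V a) = (\<Sum>x\<in>?S. \<iota> (V a x) * \<phi> x)"
      using assms S(1) by (intro pairing_eq_sum) auto
    then show "\<iota> (m a) * (\<Sum>x\<in>?S. \<iota> (V a x) * \<phi> x) = \<iota> (m a) * pairing \<iota> \<phi> (V a)"
      by simp
  qed
  finally show ?thesis .
qed

lemma bdry_eq_sum:
  assumes "finite S" "support c \<subseteq> S"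
  shows "bdry G n c ys = (\<Sum>xs\<in>S. c xs * (\<Sum>i | i \<le> n \<and> face G n i xs = ys. (-1) ^ i))"
  unfolding bdry_def using assms by (intro sum.mono_neutral_left) auto

lemma bdry_zero: "bdry G n (\<lambda>_. 0) = (\<lambda>_. 0)"
  by (simp add: bdry_def fun_eq_iff)

lemma bdry_add:
  assumes "finite (support c)" "finite (support c')"
  shows "bdry G n (\<lambda>x. c x + c' x) ys = bdry G n c ys + bdry G n c' ys"
proof -
  let ?S = "support c \<union> support c'"
  have "bdry G n (\<lambda>x. c x + c' x) ys = (\<Sum>xs\<in>?S. (c xs + c' xs) * (\<Sum>i | i \<le> n \<and> face G n i xs = ys. (-1) ^ i))"
    "bdry G n c ys = (\<Sum>xs\<in>?S. c xs * (\<Sum>i | i \<le> n \<and> face G n i xs = ys. (-1) ^ i))"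
    "bdry G n c' ys = (\<Sum>xs\<in>?S. c' xs * (\<Sum>i | i \<le> n \<and> face G n i xs = ys. (-1) ^ i))"
    using assms by (auto intro!: bdry_eq_sum)
  then show ?thesis
    by (simp add: distrib_right sum.distrib)
qed

lemma bdry_scale:
  assumes "finite (support c)"
  shows "bdry G n (\<lambda>x. r * c x) ys = r * bdry G n c ys"
proof -
  have "bdry G n (\<lambda>x. r * c x) ys = (\<Sum>xs\<in>support c. r * c xs * (\<Sum>i | i \<le> n \<and> face G n i xs = ys. (-1) ^ i))"
    using assms by (intro bdry_eq_sum) auto
  also have "\<dots> = r * bdry G n c ys"
    by (simp only: bdry_eq_sum[OF assms order_refl] sum_distrib_left mult.assoc)
  finally show ?thesis .
qed

lemma bdry_diff:
  assumes "finite (support c)" "finite (support c')"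
  shows "bdry G n (\<lambda>x. c x - c' x) ys = bdry G n c ys - bdry G n c' ys"
proof -
  let ?S = "support c \<union> support c'"
  have "bdry G n (\<lambda>x. c x - c' x) ys = (\<Sum>xs\<in>?S. (c xs - c' xs) * (\<Sum>i | i \<le> n \<and> face G n i xs = ys. (-1) ^ i))"
    "bdry G n c ys = (\<Sum>xs\<in>?S. c xs * (\<Sum>i | i \<le> n \<and> face G n i xs = ys. (-1) ^ i))"
    "bdry G n c' ys = (\<Sum>xs\<in>?S. c' xs * (\<Sum>i | i \<le> n \<and> face G n i xs = ys. (-1) ^ i))"
    using assms by (auto intro!: bdry_eq_sum)
  then show ?thesis
    by (simp add: left_diff_distrib sum_subtractf)
qed

lemma bdry_lincomb:
  assumes "finite A" "\<And>a. a \<in> A \<Longrightarrow> finite (support (V a))"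
  shows "bdry G n (lincomb A m V) = lincomb A m (\<lambda>a. bdry G n (V a))"
proof
  fix ys
  let ?S = "\<Union>a\<in>A. support (V a)" and ?N = "\<lambda>xs. \<Sum>i | i \<le> n \<and> face G n i xs = ys. (-1) ^ i"
  have S: "finite ?S" "support (lincomb A m V) \<subseteq> ?S"
    using assms support_lincomb[of A m V] by auto
  have "bdry G n (lincomb A m V) ys = (\<Sum>xs\<in>?S. \<Sum>a\<in>A. m a * (V a xs * ?N xs))"
    unfolding bdry_eq_sum[OF S] by (simp add: lincomb_def sum_distrib_right mult.assoc)
  also have "\<dots> = (\<Sum>a\<in>A. m a * (\<Sum>xs\<in>?S. V a xs * ?N xs))"
    by (subst sum.swap) (simp add: sum_distrib_left)
  also have "\<dots> = lincomb A m (\<lambda>a. bdry G n (V a)) ys"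
    unfolding lincomb_def using assms S(1) by (intro sum.cong refl arg_cong2[where f = "(*)"] bdry_eq_sum[symmetric]) auto
  finally show "bdry G n (lincomb A m V) ys = lincomb A m (\<lambda>a. bdry G n (V a)) ys" .
qed

lemma chain_zero: "chain G n (\<lambda>_. 0)"
  by (simp add: chain_def)

lemma chain_add: "chain G n c \<Longrightarrow> chain G n c' \<Longrightarrow> chain G n (\<lambda>x. c x + c' x)"
  unfolding chain_def by (rule conjI, rule finite_subset[of _ "support c \<union> support c'"]) force+

lemma chain_scale: "chain G n c \<Longrightarrow> chain G n (\<lambda>x. r * c x)"
  unfolding chain_def by (rule conjI, rule finite_subset[of _ "support c"]) auto

lemma chain_diff: "chain G n c \<Longrightarrow> chain G n c' \<Longrightarrow> chain G n (\<lambda>x. c x - c' x)"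
  unfolding chain_def using support_diff[of c c'] by (meson finite_Un finite_subset le_sup_iff subset_trans)

lemma chain_lincomb: "finite A \<Longrightarrow> (\<And>a. a \<in> A \<Longrightarrow> chain G n (V a)) \<Longrightarrow> chain G n (lincomb A m V)"
  unfolding chain_def using support_lincomb[of A m V] by (meson UN_least finite_UN_I finite_subset subset_trans)

lemma chain_elementary_chain: "t \<in> tuples G n \<Longrightarrow> chain G n (elementary_chain t)"
  by (simp add: chain_def elementary_chain_def)

lemma support_bdry:
  "support (bdry G (Suc k) c) \<subseteq> (\<lambda>(xs, i). face G (Suc k) i xs) ` (support c \<times> {0..Suc k})"
proof
  fix ys
  assume ys: "ys \<in> support (bdry G (Suc k) c)"
  then obtain xs where "c xs \<noteq> 0" "{i. i \<le> Suc k \<and> face G (Suc k) i xs = ys} \<noteq> {}"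
    unfolding bdry_def by (metis (mono_tags, lifting) mem_Collect_eq mult_zero_right sum.empty sum.neutral)
  then show "ys \<in> (\<lambda>(xs, i). face G (Suc k) i xs) ` (support c \<times> {0..Suc k})"
    by force
qed

lemma chain_bdry:
  assumes "group G" "chain G (Suc k) c"
  shows "chain G k (bdry G (Suc k) c)"
proof -
  have "(\<lambda>(xs, i). face G (Suc k) i xs) ` (support c \<times> {0..Suc k}) \<subseteq> tuples G k"
    using assms face_in_tuples[OF assms(1)] by (auto simp: chain_def)
  moreover have "finite (support c)"
    using assms(2) by (simp add: chain_def)
  ultimately show ?thesis
    using support_bdry[of G k c] unfolding chain_def by (meson finite_SigmaI finite_atLeastAtMost
        finite_imageI finite_subset subset_trans)
qed

lemma pairing_bdry:
  assumes G: "group G" and hom: "is_ring_hom \<iota>" and c: "chain G (Suc k) c"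
  shows "pairing \<iota> \<phi> (bdry G (Suc k) c) = pairing \<iota> (cobdry G k \<phi>) c"
proof -
  let ?N = "\<lambda>xs ys. \<Sum>i | i \<le> Suc k \<and> face G (Suc k) i xs = ys. (-1) ^ i"
  define Y where "Y = (\<lambda>(xs, i). face G (Suc k) i xs) ` (support c \<times> {0..Suc k})"
  have fin: "finite (support c)"
    using c by (simp add: chain_def)
  then have finY: "finite Y"
    by (simp add: Y_def)
  have "pairing \<iota> \<phi> (bdry G (Suc k) c) = (\<Sum>ys\<in>Y. \<iota> (bdry G (Suc k) c ys) * \<phi> ys)"
    using support_bdry by (intro pairing_eq_sum[OF hom finY]) (simp add: Y_def)
  also have "\<dots> = (\<Sum>ys\<in>Y. \<Sum>xs\<in>support c. \<iota> (c xs) * (\<iota> (?N xs ys) * \<phi> ys))"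
    by (simp add: bdry_eq_sum[OF fin] is_ring_hom_sum[OF hom] is_ring_hom_mult[OF hom]
        sum_distrib_right mult.assoc)
  also have "\<dots> = (\<Sum>xs\<in>support c. \<iota> (c xs) * (\<Sum>ys\<in>Y. \<iota> (?N xs ys) * \<phi> ys))"
    by (subst sum.swap) (simp add: sum_distrib_left)
  also have "\<dots> = (\<Sum>xs\<in>support c. \<iota> (c xs) * cobdry G k \<phi> xs)"
  proof (rule sum.cong[OF refl])
    fix xs
    assume xs: "xs \<in> support c"
    have "(\<Sum>ys\<in>Y. \<iota> (?N xs ys) * \<phi> ys) =
        (\<Sum>ys\<in>Y. \<Sum>i\<in>{i\<in>{0..Suc k}. face G (Suc k) i xs = ys}. (-1) ^ i * \<phi> (face G (Suc k) i xs))"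
      by (intro sum.cong refl) (simp add: is_ring_hom_sum[OF hom] is_ring_hom_neg_one_power[OF hom]
          sum_distrib_right atLeast0AtMost atMost_def conj_commute)
    also have "\<dots> = (\<Sum>i\<in>{0..Suc k}. (-1) ^ i * \<phi> (face G (Suc k) i xs))"
      using xs finY by (intro sum.group) (auto simp: Y_def)
    also have "\<dots> = cobdry G k \<phi> xs"
      using xs c by (auto simp: cobdry_def chain_def)
    finally show "\<iota> (c xs) * (\<Sum>ys\<in>Y. \<iota> (?N xs ys) * \<phi> ys) = \<iota> (c xs) * cobdry G k \<phi> xs"
      by simp
  qed
  also have "\<dots> = pairing \<iota> (cobdry G k \<phi>) c"
    by (simp add: pairing_def)
  finally show ?thesis .
qed

lemma cobdry_eq_pairing_bdry:
  assumes "group G" "is_ring_hom \<iota>" "t \<in> tuples G (Suc k)"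
  shows "cobdry G k \<phi> t = pairing \<iota> \<phi> (bdry G (Suc k) (elementary_chain t))"
  using pairing_bdry[OF assms(1,2) chain_elementary_chain[OF assms(3)]]
  by (simp add: pairing_elementary_chain[OF assms(2)])

section \<open>Triangular generators of submodules over a principal ideal ring\<close>

definition is_ideal :: "'r::comm_ring_1 set \<Rightarrow> bool" where
  "is_ideal I \<longleftrightarrow> 0 \<in> I \<and> (\<forall>a\<in>I. \<forall>b\<in>I. a + b \<in> I) \<and> (\<forall>r. \<forall>a\<in>I. r * a \<in> I)"

definition ideals_principal :: "'r::comm_ring_1 itself \<Rightarrow> bool" where
  "ideals_principal _ \<longleftrightarrow> (\<forall>I::'r set. is_ideal I \<longrightarrow> (\<exists>d\<in>I. \<forall>a\<in>I. d dvd a))"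

lemma ideals_principal_field: "ideals_principal TYPE('r::field)"
  unfolding ideals_principal_def is_ideal_def by (metis dvd_field_iff)

lemma ideals_principal_euclidean_ring: "ideals_principal TYPE('r::euclidean_ring)"
  unfolding ideals_principal_def
proof (intro allI impI)
  fix I :: "'r set"
  assume I: "is_ideal I"
  show "\<exists>d\<in>I. \<forall>a\<in>I. d dvd a"
  proof (cases "I \<subseteq> {0}")
    case True
    with I show ?thesis
      by (auto simp: is_ideal_def)
  next
    case False
    then obtain d where d: "d \<in> I" "d \<noteq> 0"
      and least: "\<And>e. e \<in> I \<Longrightarrow> e \<noteq> 0 \<Longrightarrow> euclidean_size d \<le> euclidean_size e"
      using ex_has_least_nat[of "\<lambda>e. e \<in> I \<and> e \<noteq> 0" _ euclidean_size] by blast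
    have "d dvd a" if "a \<in> I" for a
    proof -
      have "a + (- (a div d)) * d \<in> I"
        using I d(1) that unfolding is_ideal_def by blast
      then have "a mod d \<in> I"
        by (simp add: minus_div_mult_eq_mod)
      then have "a mod d = 0"
        using least[of "a mod d"] mod_size_less[OF d(2), of a] by fastforce
      then show ?thesis
        by (simp add: mod_eq_0_iff_dvd)
    qed
    with d show ?thesis
      by blast
  qed
qed

lemma ex_wfrec_fixpoint:
  assumes "wf R" "\<And>f g x. (\<And>y. (y, x) \<in> R \<Longrightarrow> f y = g y) \<Longrightarrow> F f x = F g x"
  shows "\<exists>h. \<forall>x. h x = F h x"
  using wfrec_fixpoint[OF assms(1)] assms(2) unfolding adm_wf_def by metis

lemma ex_wellorder: "\<exists>leq lt. class.wellorder (leq :: 'a \<Rightarrow> 'a \<Rightarrow> bool) lt"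
proof -
  obtain r :: "'a rel" where r: "well_order_on UNIV r"
    using well_order_on by blast
  then have lin: "linear_order r" and wf: "wf (r - Id)"
    by (simp_all add: well_order_on_def)
  then have total: "(x, y) \<in> r \<or> (y, x) \<in> r" for x y
    by (cases "x = y") (auto simp: linear_order_on_def partial_order_on_def preorder_on_def
        refl_on_def total_on_def)
  have "class.wellorder (\<lambda>x y. (x, y) \<in> r) (\<lambda>x y. (x, y) \<in> r - Id)"
  proof (unfold_locales)
    show "P a" if "\<And>x. (\<And>y. (y, x) \<in> r - Id \<Longrightarrow> P y) \<Longrightarrow> P x" for P a
      using wf_induct[OF wf, of P] that by blast
  qed (use lin total in \<open>auto simp: linear_order_on_def partial_order_on_def preorder_on_def
      refl_on_def dest: transD antisymD\<close>)
  then show ?thesis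
    by blast
qed

text \<open>The standard proof that submodules of free modules over a principal ideal domain are
  free: along a well-order of the basis, \<open>echelon_vec \<alpha>\<close> is an element of \<open>B\<close> supported below
  \<open>\<alpha>\<close> whose coefficient at \<open>\<alpha>\<close> generates the ideal of all such coefficients. These elements
  form a triangular generating system of \<open>B\<close>.\<close>
locale pid_submodule =
  wo: wellorder leq lt for leq :: "'x \<Rightarrow> 'x \<Rightarrow> bool" (infix "\<preceq>" 50) and lt (infix "\<prec>" 50) +
  fixes B :: "('x \<Rightarrow> 'r::idom) set"
  assumes zero_in: "(\<lambda>_. 0) \<in> B"
    and add_in: "y \<in> B \<Longrightarrow> y' \<in> B \<Longrightarrow> (\<lambda>x. y x + y' x) \<in> B"
    and scale_in: "y \<in> B \<Longrightarrow> (\<lambda>x. r * y x) \<in> B"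
    and finite_support: "y \<in> B \<Longrightarrow> finite (support y)"
    and principal: "ideals_principal TYPE('r)"
begin

definition supported_below :: "'x \<Rightarrow> ('x \<Rightarrow> 'r) \<Rightarrow> bool" where
  "supported_below \<alpha> y \<longleftrightarrow> (\<forall>x. y x \<noteq> 0 \<longrightarrow> x \<preceq> \<alpha>)"

definition leading_coeffs :: "'x \<Rightarrow> 'r set" where
  "leading_coeffs \<alpha> = {y \<alpha> | y. y \<in> B \<and> supported_below \<alpha> y}"

definition pivot :: "'x \<Rightarrow> 'r" where
  "pivot \<alpha> = (SOME d. d \<in> leading_coeffs \<alpha> \<and> (\<forall>a\<in>leading_coeffs \<alpha>. d dvd a))"

definition echelon_vec :: "'x \<Rightarrow> 'x \<Rightarrow> 'r" where
  "echelon_vec \<alpha> =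
    (if pivot \<alpha> = 0 then (\<lambda>_. 0) else SOME y. y \<in> B \<and> supported_below \<alpha> y \<and> y \<alpha> = pivot \<alpha>)"

lemma is_ideal_leading_coeffs: "is_ideal (leading_coeffs \<alpha>)"
  unfolding is_ideal_def leading_coeffs_def
proof (intro conjI ballI allI)
  show "0 \<in> {y \<alpha> |y. y \<in> B \<and> supported_below \<alpha> y}"
    by (intro CollectI exI[of _ "\<lambda>_. 0"]) (simp add: zero_in supported_below_def)
next
  fix a b
  assume "a \<in> {y \<alpha> |y. y \<in> B \<and> supported_below \<alpha> y}" "b \<in> {y \<alpha> |y. y \<in> B \<and> supported_below \<alpha> y}"
  then obtain y y' where "a = y \<alpha>" "b = y' \<alpha>" "y \<in> B" "y' \<in> B"
    "\<forall>x. y x \<noteq> 0 \<longrightarrow> x \<preceq> \<alpha>" "\<forall>x. y' x \<noteq> 0 \<longrightarrow> x \<preceq> \<alpha>"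
    by (auto simp: supported_below_def)
  then show "a + b \<in> {y \<alpha> |y. y \<in> B \<and> supported_below \<alpha> y}"
    by (intro CollectI exI[of _ "\<lambda>x. y x + y' x"])
      (simp add: add_in supported_below_def, metis add.right_neutral)
next
  fix r a
  assume "a \<in> {y \<alpha> |y. y \<in> B \<and> supported_below \<alpha> y}"
  then obtain y where "a = y \<alpha>" "y \<in> B" "supported_below \<alpha> y"
    by blast
  then show "r * a \<in> {y \<alpha> |y. y \<in> B \<and> supported_below \<alpha> y}"
    by (intro CollectI exI[of _ "\<lambda>x. r * y x"]) (simp add: scale_in supported_below_def)
qed

lemma pivot_in_leading_coeffs: "pivot \<alpha> \<in> leading_coeffs \<alpha>"
  and pivot_dvd: "a \<in> leading_coeffs \<alpha> \<Longrightarrow> pivot \<alpha> dvd a"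
proof -
  have "\<exists>d. d \<in> leading_coeffs \<alpha> \<and> (\<forall>a\<in>leading_coeffs \<alpha>. d dvd a)"
    using principal is_ideal_leading_coeffs[of \<alpha>] unfolding ideals_principal_def by blast
  then have "pivot \<alpha> \<in> leading_coeffs \<alpha> \<and> (\<forall>a\<in>leading_coeffs \<alpha>. pivot \<alpha> dvd a)"
    unfolding pivot_def by (rule someI_ex)
  then show "pivot \<alpha> \<in> leading_coeffs \<alpha>" "a \<in> leading_coeffs \<alpha> \<Longrightarrow> pivot \<alpha> dvd a"
    by auto
qed

lemma echelon_vec_in: "echelon_vec \<alpha> \<in> B"
  and supported_below_echelon_vec: "supported_below \<alpha> (echelon_vec \<alpha>)"
  and echelon_vec_pivot: "echelon_vec \<alpha> \<alpha> = pivot \<alpha>"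
proof -
  have "echelon_vec \<alpha> \<in> B \<and> supported_below \<alpha> (echelon_vec \<alpha>) \<and> echelon_vec \<alpha> \<alpha> = pivot \<alpha>"
  proof (cases "pivot \<alpha> = 0")
    case True
    then show ?thesis
      using zero_in by (simp add: echelon_vec_def supported_below_def)
  next
    case False
    have "\<exists>y. y \<in> B \<and> supported_below \<alpha> y \<and> y \<alpha> = pivot \<alpha>"
      using pivot_in_leading_coeffs[of \<alpha>] by (auto simp: leading_coeffs_def)
    then have "(SOME y. y \<in> B \<and> supported_below \<alpha> y \<and> y \<alpha> = pivot \<alpha>) \<in> B \<and>
        supported_below \<alpha> (SOME y. y \<in> B \<and> supported_below \<alpha> y \<and> y \<alpha> = pivot \<alpha>) \<and>
        (SOME y. y \<in> B \<and> supported_below \<alpha> y \<and> y \<alpha> = pivot \<alpha>) \<alpha> = pivot \<alpha>"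
      by (rule someI_ex)
    with False show ?thesis
      by (simp add: echelon_vec_def)
  qed
  then show "echelon_vec \<alpha> \<in> B" "supported_below \<alpha> (echelon_vec \<alpha>)" "echelon_vec \<alpha> \<alpha> = pivot \<alpha>"
    by auto
qed

lemma echelon_vec_eq_zero: "pivot \<alpha> = 0 \<Longrightarrow> echelon_vec \<alpha> = (\<lambda>_. 0)"
  by (simp add: echelon_vec_def)

lemma ex_supported_below_nonzero:
  assumes "finite (support y)" "y \<noteq> (\<lambda>_. 0)"
  obtains \<alpha> where "y \<alpha> \<noteq> 0" "supported_below \<alpha> y"
proof -
  have "support y \<noteq> {}"
    using assms(2) by auto
  then obtain \<alpha> where \<alpha>: "\<alpha> \<in> support y" "\<And>x. x \<in> support y \<Longrightarrow> \<alpha> \<preceq> x \<Longrightarrow> \<alpha> = x"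
    using wo.finite_has_maximal[OF assms(1)] by blast
  have "x \<preceq> \<alpha>" if "y x \<noteq> 0" for x
    using \<alpha>(2)[of x] that wo.linear[of x \<alpha>] by auto
  with \<alpha>(1) show ?thesis
    using that by (simp add: supported_below_def)
qed

lemma reduce_by_echelon_vec:
  assumes y: "y \<in> B" "supported_below \<beta> y"
  obtains q where "(\<lambda>x. y x - q * echelon_vec \<beta> x) \<in> B"
    "\<And>x. y x - q * echelon_vec \<beta> x \<noteq> 0 \<Longrightarrow> x \<prec> \<beta>"
proof -
  have "y \<beta> \<in> leading_coeffs \<beta>"
    using y by (auto simp: leading_coeffs_def)
  then obtain q where q: "y \<beta> = pivot \<beta> * q"
    using pivot_dvd by blast
  have "(\<lambda>x. y x - q * echelon_vec \<beta> x) \<in> B"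
    using add_in[OF y(1) scale_in[OF echelon_vec_in[of \<beta>], where r = "- q"]] by simp
  moreover have "x \<prec> \<beta>" if "y x - q * echelon_vec \<beta> x \<noteq> 0" for x
  proof -
    have "y x \<noteq> 0 \<or> echelon_vec \<beta> x \<noteq> 0"
      using that by auto
    then have "x \<preceq> \<beta>"
      using y(2) supported_below_echelon_vec[of \<beta>] by (auto simp: supported_below_def)
    moreover have "x \<noteq> \<beta>"
      using that q echelon_vec_pivot[of \<beta>] by (auto simp: mult.commute)
    ultimately show ?thesis
      using wo.le_less by blast
  qed
  ultimately show ?thesis
    by (rule that)
qed

lemma in_span_echelon_vecs_if_supported_below:
  "y \<in> B \<Longrightarrow> supported_below \<beta> y \<Longrightarrow> \<exists>A m. finite A \<and> y = lincomb A m echelon_vec"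
proof (induction \<beta> arbitrary: y rule: wo.less_induct)
  case (less \<beta>)
  obtain q where y': "(\<lambda>x. y x - q * echelon_vec \<beta> x) \<in> B"
    and below: "\<And>x. y x - q * echelon_vec \<beta> x \<noteq> 0 \<Longrightarrow> x \<prec> \<beta>"
    using reduce_by_echelon_vec[OF less.prems] by blast
  obtain A m where "finite A" "(\<lambda>x. y x - q * echelon_vec \<beta> x) = lincomb A m echelon_vec"
  proof (cases "(\<lambda>x. y x - q * echelon_vec \<beta> x) = (\<lambda>_. 0)")
    case True
    then show ?thesis
      using that[of "{}"] by (simp add: lincomb_def)
  next
    case False
    obtain \<alpha> where "y \<alpha> - q * echelon_vec \<beta> \<alpha> \<noteq> 0" "supported_below \<alpha> (\<lambda>x. y x - q * echelon_vec \<beta> x)"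
      by (rule ex_supported_below_nonzero[OF finite_support[OF y'] False])
    then show ?thesis
      using less.IH[of \<alpha>] below y' that by blast
  qed
  then have "y = (\<lambda>x. q * echelon_vec \<beta> x + lincomb A m echelon_vec x)"
    by (simp add: fun_eq_iff flip: \<open>_ = lincomb A m echelon_vec\<close>)
  with \<open>finite A\<close> show ?case
    using lincomb_add_term[of A q echelon_vec \<beta> m] by blast
qed

lemma in_span_echelon_vecs:
  assumes "y \<in> B"
  shows "\<exists>A m. finite A \<and> y = lincomb A m echelon_vec"
proof (cases "y = (\<lambda>_. 0)")
  case True
  then show ?thesis
    by (intro exI[of _ "{}"]) (simp add: lincomb_def)
next
  case False
  then obtain \<beta> where "supported_below \<beta> y"
    using ex_supported_below_nonzero[OF finite_support[OF assms]] by blast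
  with assms show ?thesis
    by (rule in_span_echelon_vecs_if_supported_below)
qed

text \<open>Since \<open>echelon_vec \<alpha>\<close> has the coefficient \<open>pivot \<alpha>\<close>, invertible in \<open>'k\<close>, at \<open>\<alpha>\<close> and is
  otherwise supported strictly below \<open>\<alpha>\<close>, the system \<open>pairing \<iota> h (echelon_vec \<alpha>) = v \<alpha>\<close>
  is triangular and is solved by well-founded recursion.\<close>
lemma ex_pairing_echelon_vecs_eq:
  fixes \<iota> :: "'r \<Rightarrow> 'k::field" and v :: "'x \<Rightarrow> 'k"
  assumes hom: "is_ring_hom \<iota>" and inj: "\<And>a. \<iota> a = 0 \<Longrightarrow> a = 0"
    and v: "\<And>\<alpha>. pivot \<alpha> = 0 \<Longrightarrow> v \<alpha> = 0"
  shows "\<exists>h. \<forall>\<alpha>. pairing \<iota> h (echelon_vec \<alpha>) = v \<alpha>"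
proof -
  let ?lower = "\<lambda>\<alpha>. support (echelon_vec \<alpha>) - {\<alpha>}"
  define F where "F = (\<lambda>h \<alpha>. if pivot \<alpha> = 0 then 0
    else (v \<alpha> - (\<Sum>x\<in>?lower \<alpha>. \<iota> (echelon_vec \<alpha> x) * h x)) / \<iota> (pivot \<alpha>))"
  have lower: "x \<prec> \<alpha>" if "x \<in> ?lower \<alpha>" for x \<alpha>
    using that supported_below_echelon_vec[of \<alpha>] wo.le_less by (auto simp: supported_below_def)
  have "\<exists>h. \<forall>\<alpha>. h \<alpha> = F h \<alpha>"
  proof (rule ex_wfrec_fixpoint[OF wo.wf])
    fix f g :: "'x \<Rightarrow> 'k" and \<alpha>
    assume "\<And>x. (x, \<alpha>) \<in> {(x, y). x \<prec> y} \<Longrightarrow> f x = g x"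
    then have "(\<Sum>x\<in>?lower \<alpha>. \<iota> (echelon_vec \<alpha> x) * f x) = (\<Sum>x\<in>?lower \<alpha>. \<iota> (echelon_vec \<alpha> x) * g x)"
      using lower by (intro sum.cong) auto
    then show "F f \<alpha> = F g \<alpha>"
      by (simp add: F_def)
  qed
  then obtain h where h_eq: "\<And>\<alpha>. h \<alpha> = F h \<alpha>"
    by blast
  have "pairing \<iota> h (echelon_vec \<alpha>) = v \<alpha>" for \<alpha>
  proof (cases "pivot \<alpha> = 0")
    case True
    then show ?thesis
      using v by (simp add: echelon_vec_eq_zero pairing_zero)
  next
    case False
    then have "\<iota> (pivot \<alpha>) \<noteq> 0"
      using inj by blast
    have "pairing \<iota> h (echelon_vec \<alpha>) =
        \<iota> (pivot \<alpha>) * h \<alpha> + (\<Sum>x\<in>?lower \<alpha>. \<iota> (echelon_vec \<alpha> x) * h x)"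
      unfolding pairing_def by (subst sum.remove[OF finite_support[OF echelon_vec_in], of \<alpha>])
        (simp_all add: echelon_vec_pivot False)
    also have "\<iota> (pivot \<alpha>) * h \<alpha> = v \<alpha> - (\<Sum>x\<in>?lower \<alpha>. \<iota> (echelon_vec \<alpha> x) * h x)"
      using h_eq[of \<alpha>] False \<open>\<iota> (pivot \<alpha>) \<noteq> 0\<close> by (simp add: F_def)
    finally show ?thesis
      by simp
  qed
  then show ?thesis
    by blast
qed

lemma ex_lifts_echelon_vecs:
  assumes "\<And>y. y \<in> B \<Longrightarrow> \<exists>c\<in>C. D c = y" "(\<lambda>_. 0) \<in> C" "D (\<lambda>_. 0) = (\<lambda>_. 0)"
  obtains U where "\<And>\<alpha>. U \<alpha> \<in> C" "\<And>\<alpha>. D (U \<alpha>) = echelon_vec \<alpha>" "\<And>\<alpha>. pivot \<alpha> = 0 \<Longrightarrow> U \<alpha> = (\<lambda>_. 0)"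
proof -
  define U where "U \<alpha> = (if pivot \<alpha> = 0 then (\<lambda>_. 0) else SOME c. c \<in> C \<and> D c = echelon_vec \<alpha>)" for \<alpha>
  have "U \<alpha> \<in> C \<and> D (U \<alpha>) = echelon_vec \<alpha>" for \<alpha>
  proof (cases "pivot \<alpha> = 0")
    case True
    then show ?thesis
      using assms(2,3) by (simp add: U_def echelon_vec_eq_zero)
  next
    case False
    have "\<exists>c. c \<in> C \<and> D c = echelon_vec \<alpha>"
      using assms(1)[OF echelon_vec_in] by blast
    then have "(SOME c. c \<in> C \<and> D c = echelon_vec \<alpha>) \<in> C \<and> D (SOME c. c \<in> C \<and> D c = echelon_vec \<alpha>) = echelon_vec \<alpha>"
      by (rule someI_ex)
    with False show ?thesis
      by (simp add: U_def)
  qed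
  then show ?thesis
    by (intro that[of U]) (simp_all add: U_def)
qed

end

section \<open>Non-Archimedean absolute values\<close>

context
  fixes av :: "'k::field \<Rightarrow> real"
  assumes av: "nonarch_abs av"
begin

lemma nonarch_abs_zero: "av 0 = 0"
  and nonarch_abs_nonneg: "av x \<ge> 0"
  and nonarch_abs_mult: "av (x * y) = av x * av y"
  and nonarch_abs_ultrametric: "av (x + y) \<le> max (av x) (av y)"
  using av by (simp_all add: nonarch_abs_def)

lemma nonarch_abs_one: "av 1 = 1"
proof -
  have "av 1 = av 1 * av 1" "av 1 \<noteq> 0"
    using av nonarch_abs_mult[of 1 1] by (auto simp: nonarch_abs_def)
  then show ?thesis
    by simp
qed

lemma nonarch_abs_uminus: "av (- x) = av x"
proof -
  have "(av (-1))\<^sup>2 = 1"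
    using nonarch_abs_mult[of "-1" "-1"] nonarch_abs_one by (simp add: power2_eq_square)
  then have "av (-1) = 1"
    using nonarch_abs_nonneg[of "-1"] by (auto simp: power2_eq_1_iff)
  then show ?thesis
    using nonarch_abs_mult[of "-1" x] by simp
qed

lemma nonarch_abs_sum_le: "0 \<le> M \<Longrightarrow> (\<And>a. a \<in> A \<Longrightarrow> av (f a) \<le> M) \<Longrightarrow> av (sum f A) \<le> M"
proof (induction A rule: infinite_finite_induct)
  case (insert a A)
  then have "max (av (f a)) (av (sum f A)) \<le> M"
    by simp
  with insert(1,2) show ?case
    using nonarch_abs_ultrametric[of "f a" "sum f A"] by (simp del: max.bounded_iff)
qed (simp_all add: nonarch_abs_zero)

lemma nonarch_abs_of_nat_le: "av (of_nat n) \<le> 1"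
proof (induction n)
  case (Suc n)
  then show ?case
    using nonarch_abs_ultrametric[of 1 "of_nat n"] by (simp add: nonarch_abs_one)
qed (simp add: nonarch_abs_zero)

lemma nonarch_abs_of_int_le: "av (of_int z) \<le> 1"
  using nonarch_abs_of_nat_le[of "nat \<bar>z\<bar>"] nonarch_abs_uminus[of "of_nat (nat \<bar>z\<bar>)"]
  by (cases "z \<ge> 0") simp_all

lemma nonarch_abs_of_nat_eq_one:
  assumes "res_char av = 0" "n > 0"
  shows "av (of_nat n) = 1"
proof -
  have "\<not> (\<exists>n>0. av (of_nat n :: 'k) < 1)"
  proof
    assume ex: "\<exists>n>0. av (of_nat n :: 'k) < 1"
    then have "(LEAST n. n > 0 \<and> av (of_nat n :: 'k) < 1) > 0"
      using LeastI_ex[OF ex] by blast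
    with ex assms(1) show False
      by (simp add: res_char_def)
  qed
  then have "\<not> av (of_nat n :: 'k) < 1"
    using assms(2) by blast
  then show ?thesis
    using nonarch_abs_of_nat_le[of n] by simp
qed

end

lemma bounded_cochain_zero:
  assumes "nonarch_abs av" "cochain G 0 f"
  shows "bounded_cochain av f"
proof -
  have "f xs = 0" if "xs \<noteq> []" for xs
    using assms(2) that by (simp add: cochain_def tuples_def)
  then have "av (f xs) \<le> av (f [])" for xs
    using assms(1) by (cases "xs = []") (simp_all add: nonarch_abs_zero nonarch_abs_nonneg)
  then show ?thesis
    unfolding bounded_cochain_def by blast
qed

section \<open>Bounded representatives of cocycles\<close>

lemma pid_submodule_boundaries:
  fixes G :: "('g, 'b) monoid_scheme"
  assumes "class.wellorder leq lt" "group G" "ideals_principal TYPE('r::idom)"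
  shows "pid_submodule leq lt {bdry G (Suc m) c | c :: 'g list \<Rightarrow> 'r. chain G (Suc m) c}"
proof -
  interpret wellorder leq lt
    by fact
  have fin: "finite (support c)" if "chain G k c" for k and c :: "'g list \<Rightarrow> 'r"
    using that by (simp add: chain_def)
  show ?thesis
  proof (unfold_locales)
    show "(\<lambda>_. 0) \<in> {bdry G (Suc m) c | c :: 'g list \<Rightarrow> 'r. chain G (Suc m) c}"
      by (intro CollectI exI[of _ "\<lambda>_. 0"]) (simp add: bdry_zero chain_zero)
  next
    fix y y' :: "'g list \<Rightarrow> 'r"
    assume "y \<in> {bdry G (Suc m) c |c. chain G (Suc m) c}" "y' \<in> {bdry G (Suc m) c |c. chain G (Suc m) c}"
    then obtain c c' where c: "chain G (Suc m) c" "chain G (Suc m) c'"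
      and y: "y = bdry G (Suc m) c" "y' = bdry G (Suc m) c'"
      by blast
    have "bdry G (Suc m) (\<lambda>x. c x + c' x) = (\<lambda>x. y x + y' x)"
      unfolding y using bdry_add[OF fin[OF c(1)] fin[OF c(2)]] by blast
    then show "(\<lambda>x. y x + y' x) \<in> {bdry G (Suc m) c |c. chain G (Suc m) c}"
      using chain_add[OF c] by (intro CollectI exI[of _ "\<lambda>x. c x + c' x"]) simp
  next
    fix y :: "'g list \<Rightarrow> 'r" and r
    assume "y \<in> {bdry G (Suc m) c |c. chain G (Suc m) c}"
    then obtain c where c: "chain G (Suc m) c" and y: "y = bdry G (Suc m) c"
      by blast
    have "bdry G (Suc m) (\<lambda>x. r * c x) = (\<lambda>x. r * y x)"
      unfolding y using bdry_scale[OF fin[OF c]] by blast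
    then show "(\<lambda>x. r * y x) \<in> {bdry G (Suc m) c |c. chain G (Suc m) c}"
      using chain_scale[OF c] by (intro CollectI exI[of _ "\<lambda>x. r * c x"]) simp
  next
    fix y :: "'g list \<Rightarrow> 'r"
    assume "y \<in> {bdry G (Suc m) c |c. chain G (Suc m) c}"
    then show "finite (support y)"
      using chain_bdry[OF assms(2)] fin by blast
  qed (fact assms(3))
qed

text \<open>\<open>h\<close> is prescribed on the triangular generators of the boundaries as \<open>f\<close> evaluated on
  chosen lifts of them. This needs \<open>\<iota>\<close> to be injective into a field, since over \<open>R\<close> the
  boundaries need not be a direct summand of the chains.\<close>
lemma ex_cochain_pairing_bdry_lift:
  fixes f :: "'g list \<Rightarrow> 'k::field" and \<iota> :: "'r::idom \<Rightarrow> 'k"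
  assumes G: "group G" and hom: "is_ring_hom \<iota>" and inj: "\<And>a. \<iota> a = 0 \<Longrightarrow> a = 0"
    and pid: "ideals_principal TYPE('r)"
  shows "\<exists>h. cochain G m h \<and> (\<forall>c. chain G (Suc m) c \<longrightarrow> (\<exists>u. chain G (Suc m) u \<and>
    bdry G (Suc m) u = bdry G (Suc m) c \<and> pairing \<iota> h (bdry G (Suc m) c) = pairing \<iota> f u))"
proof -
  obtain leq lt :: "'g list \<Rightarrow> 'g list \<Rightarrow> bool" where wo: "class.wellorder leq lt"
    using ex_wellorder by blast
  interpret E: pid_submodule leq lt "{bdry G (Suc m) c | c :: 'g list \<Rightarrow> 'r. chain G (Suc m) c}"
    by (rule pid_submodule_boundaries[OF wo G pid])
  obtain U where U_chain: "\<And>\<alpha>. chain G (Suc m) (U \<alpha>)"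
    and U_bdry: "\<And>\<alpha>. bdry G (Suc m) (U \<alpha>) = E.echelon_vec \<alpha>"
    and U_zero: "\<And>\<alpha>. E.pivot \<alpha> = 0 \<Longrightarrow> U \<alpha> = (\<lambda>_. 0)"
    by (rule E.ex_lifts_echelon_vecs[of "{c. chain G (Suc m) c}" "bdry G (Suc m)"])
      (auto simp: chain_zero bdry_zero)
  have "\<exists>h0. \<forall>\<alpha>. pairing \<iota> h0 (E.echelon_vec \<alpha>) = pairing \<iota> f (U \<alpha>)"
  proof (rule E.ex_pairing_echelon_vecs_eq[OF hom inj])
    fix \<alpha>
    assume "E.pivot \<alpha> = 0"
    then show "pairing \<iota> f (U \<alpha>) = 0"
      by (simp add: U_zero pairing_zero)
  qed
  then obtain h0 where h0: "\<And>\<alpha>. pairing \<iota> h0 (E.echelon_vec \<alpha>) = pairing \<iota> f (U \<alpha>)"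
    by blast
  define h where "h = (\<lambda>x. if x \<in> tuples G m then h0 x else 0)"
  have "\<exists>u. chain G (Suc m) u \<and> bdry G (Suc m) u = bdry G (Suc m) c \<and>
      pairing \<iota> h (bdry G (Suc m) c) = pairing \<iota> f u" if c: "chain G (Suc m) c" for c
  proof -
    obtain A \<mu> where A: "finite A" "bdry G (Suc m) c = lincomb A \<mu> E.echelon_vec"
      using E.in_span_echelon_vecs c by blast
    have fin_U: "finite (support (U a))" for a
      using U_chain by (simp add: chain_def)
    have fin_echelon: "finite (support (E.echelon_vec a))" for a
      using E.finite_support[OF E.echelon_vec_in] .
    have "pairing \<iota> h (bdry G (Suc m) c) = pairing \<iota> h0 (bdry G (Suc m) c)"
      using chain_bdry[OF G c] by (intro pairing_cong) (auto simp: h_def chain_def)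
    also have "\<dots> = (\<Sum>a\<in>A. \<iota> (\<mu> a) * pairing \<iota> f (U a))"
      unfolding A(2) by (simp add: pairing_lincomb[OF hom A(1) fin_echelon] h0)
    also have "\<dots> = pairing \<iota> f (lincomb A \<mu> U)"
      by (simp add: pairing_lincomb[OF hom A(1) fin_U])
    finally have "pairing \<iota> h (bdry G (Suc m) c) = pairing \<iota> f (lincomb A \<mu> U)" .
    moreover have "bdry G (Suc m) (lincomb A \<mu> U) = bdry G (Suc m) c"
      using A by (simp add: bdry_lincomb[OF A(1) fin_U] U_bdry)
    moreover have "chain G (Suc m) (lincomb A \<mu> U)"
      using chain_lincomb[OF A(1)] U_chain by blast
    ultimately show ?thesis
      by blast
  qed
  moreover have "cochain G m h"
    by (simp add: h_def cochain_def)
  ultimately show ?thesis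
    by blast
qed

text \<open>The cycle is \<open>elementary_chain t - u\<close>, where \<open>u\<close> is the lift of the boundary of
  \<open>elementary_chain t\<close>.\<close>
lemma ex_cochain_diff_cobdry_eq_pairing_cycle:
  fixes f :: "'g list \<Rightarrow> 'k::field" and \<iota> :: "'r::idom \<Rightarrow> 'k"
  assumes G: "group G" and hom: "is_ring_hom \<iota>" and inj: "\<And>a. \<iota> a = 0 \<Longrightarrow> a = 0"
    and pid: "ideals_principal TYPE('r)"
  shows "\<exists>h. cochain G m h \<and> (\<forall>t\<in>tuples G (Suc m). \<exists>w :: 'g list \<Rightarrow> 'r.
    cycle G (Suc m) w \<and> f t - cobdry G m h t = pairing \<iota> f w)"
proof -
  obtain h where h: "cochain G m h" and lift: "\<And>c. chain G (Suc m) c \<Longrightarrow> \<exists>u. chain G (Suc m) u \<and>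
      bdry G (Suc m) u = bdry G (Suc m) c \<and> pairing \<iota> h (bdry G (Suc m) c) = pairing \<iota> f u"
    using ex_cochain_pairing_bdry_lift[OF G hom inj pid, of m f] by blast
  have "\<exists>w :: 'g list \<Rightarrow> 'r. cycle G (Suc m) w \<and> f t - cobdry G m h t = pairing \<iota> f w"
    if t: "t \<in> tuples G (Suc m)" for t
  proof -
    let ?c = "elementary_chain t :: 'g list \<Rightarrow> 'r"
    have c: "chain G (Suc m) ?c"
      by (rule chain_elementary_chain[OF t])
    then obtain u where u: "chain G (Suc m) u" "bdry G (Suc m) u = bdry G (Suc m) ?c"
      "pairing \<iota> h (bdry G (Suc m) ?c) = pairing \<iota> f u"
      using lift by blast
    have fin: "finite (support ?c)" "finite (support u)"
      using c u(1) by (simp_all add: chain_def)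
    have "cycle G (Suc m) (\<lambda>x. ?c x - u x)"
      using chain_diff[OF c u(1)] bdry_diff[OF fin, of G "Suc m"] u(2) by (simp add: cycle_def fun_eq_iff)
    moreover have "f t - cobdry G m h t = pairing \<iota> f (\<lambda>x. ?c x - u x)"
      using cobdry_eq_pairing_bdry[OF G hom t] u(3)
      by (simp add: pairing_diff[OF hom fin] pairing_elementary_chain[OF hom])
    ultimately show ?thesis
      by blast
  qed
  with h show ?thesis
    by blast
qed

lemma pairing_cocycle_eq_sum_generators:
  fixes f :: "'g list \<Rightarrow> 'k::field" and \<iota> :: "'r::comm_ring_1 \<Rightarrow> 'k"
  assumes G: "group G" and hom: "is_ring_hom \<iota>" and cocycle: "cobdry G n f = (\<lambda>_. 0)"
    and F: "finite F" "\<And>z. z \<in> F \<Longrightarrow> chain G n z" and d: "chain G (Suc n) d"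
    and w: "w = (\<lambda>xs. (\<Sum>z\<in>F. a z * z xs) + bdry G (Suc n) d xs)"
  shows "pairing \<iota> f w = (\<Sum>z\<in>F. \<iota> (a z) * pairing \<iota> f z)"
proof -
  have fin_F: "finite (support z)" if "z \<in> F" for z
    using F(2)[OF that] by (simp add: chain_def)
  have fin_d: "finite (support (bdry G (Suc n) d))"
    using chain_bdry[OF G d] by (simp add: chain_def)
  have "finite (support (lincomb F a (\<lambda>z. z)))"
    using support_lincomb[of F a "\<lambda>z. z"] F(1) fin_F by (meson finite_UN_I finite_subset)
  moreover have "support w \<subseteq> support (lincomb F a (\<lambda>z. z)) \<union> support (bdry G (Suc n) d)"
    by (auto simp: w lincomb_def)
  ultimately have "finite (support w)"
    using fin_d by (meson finite_Un finite_subset)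
  have "lincomb F a (\<lambda>z. z) = (\<lambda>xs. w xs - bdry G (Suc n) d xs)"
    by (simp add: w lincomb_def)
  moreover have "pairing \<iota> f (bdry G (Suc n) d) = 0"
    using pairing_bdry[OF G hom d] cocycle by (simp add: pairing_def)
  moreover have "pairing \<iota> f (lincomb F a (\<lambda>z. z)) = (\<Sum>z\<in>F. \<iota> (a z) * pairing \<iota> f z)"
    by (rule pairing_lincomb[OF hom F(1) fin_F])
  ultimately show ?thesis
    using pairing_diff[OF hom \<open>finite (support w)\<close> fin_d, of f] by simp
qed

text \<open>Since \<open>\<iota>\<close> maps \<open>R\<close> into the valuation ring, the ultrametric inequality bounds a
  cocycle on all cycles by its largest value on the finitely many generators of \<open>H\<^sub>n(G, R)\<close>.\<close>
lemma bounded_pairing_cycles: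
  fixes f :: "'g list \<Rightarrow> 'k::field" and \<iota> :: "'r::comm_ring_1 \<Rightarrow> 'k"
  assumes av: "nonarch_abs av" and G: "group G" and hom: "is_ring_hom \<iota>"
    and bound: "\<And>a. av (\<iota> a) \<le> 1" and fg: "homology_fg TYPE('r) G n"
    and cocycle: "cobdry G n f = (\<lambda>_. 0)"
  shows "\<exists>M. \<forall>w :: 'g list \<Rightarrow> 'r. cycle G n w \<longrightarrow> av (pairing \<iota> f w) \<le> M"
proof -
  obtain F :: "('g list \<Rightarrow> 'r) set" where F: "finite F" "\<And>z. z \<in> F \<Longrightarrow> chain G n z"
    and gen: "\<And>w. cycle G n w \<Longrightarrow> \<exists>a d. chain G (Suc n) d \<and>
      w = (\<lambda>xs. (\<Sum>z\<in>F. a z * z xs) + bdry G (Suc n) d xs)"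
    using fg unfolding homology_fg_def cycle_def by blast
  define M where "M = Max (insert 0 ((\<lambda>z. av (pairing \<iota> f z)) ` F))"
  have M: "0 \<le> M" "\<And>z. z \<in> F \<Longrightarrow> av (pairing \<iota> f z) \<le> M"
    using F(1) by (auto simp: M_def)
  have "av (pairing \<iota> f w) \<le> M" if w: "cycle G n w" for w
  proof -
    obtain a d where "chain G (Suc n) d" "w = (\<lambda>xs. (\<Sum>z\<in>F. a z * z xs) + bdry G (Suc n) d xs)"
      using gen[OF w] by blast
    then have "pairing \<iota> f w = (\<Sum>z\<in>F. \<iota> (a z) * pairing \<iota> f z)"
      using pairing_cocycle_eq_sum_generators[OF G hom cocycle F] by blast
    also have "av \<dots> \<le> M"
    proof (rule nonarch_abs_sum_le[OF av M(1)])
      fix z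
      assume "z \<in> F"
      then show "av (\<iota> (a z) * pairing \<iota> f z) \<le> M"
        using mult_mono[OF bound M(2) _ nonarch_abs_nonneg[OF av]] M(1)
        by (simp add: nonarch_abs_mult[OF av])
    qed
    finally show ?thesis .
  qed
  then show ?thesis
    by blast
qed

definition valuation_ring_embedding :: "('k::field \<Rightarrow> real) \<Rightarrow> ('r::comm_ring_1 \<Rightarrow> 'k) \<Rightarrow> bool" where
  "valuation_ring_embedding av \<iota> \<longleftrightarrow> is_ring_hom \<iota> \<and> (\<forall>a. \<iota> a = 0 \<longrightarrow> a = 0) \<and> (\<forall>a. av (\<iota> a) \<le> 1)"

lemma ex_cochain_bounded_diff_cobdry:
  fixes av :: "'k::field \<Rightarrow> real" and G :: "('g, 'b) monoid_scheme" and \<iota> :: "'r::idom \<Rightarrow> 'k"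
  assumes av: "nonarch_abs av" and G: "group G" and emb: "valuation_ring_embedding av \<iota>"
    and pid: "ideals_principal TYPE('r)" and fg: "homology_fg TYPE('r) G (Suc m)"
    and f: "cochain G (Suc m) f" "cobdry G (Suc m) f = (\<lambda>_. 0)"
  shows "\<exists>h. cochain G m h \<and> bounded_cochain av (\<lambda>t. f t - cobdry G m h t)"
proof -
  have hom: "is_ring_hom \<iota>" and inj: "\<And>a. \<iota> a = 0 \<Longrightarrow> a = 0" and bound: "\<And>a. av (\<iota> a) \<le> 1"
    using emb by (simp_all add: valuation_ring_embedding_def)
  obtain M where M: "\<And>w :: 'g list \<Rightarrow> 'r. cycle G (Suc m) w \<Longrightarrow> av (pairing \<iota> f w) \<le> M"
    using bounded_pairing_cycles[OF av G hom bound fg f(2)] by blast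
  obtain h where h: "cochain G m h" and corr: "\<And>t. t \<in> tuples G (Suc m) \<Longrightarrow>
      \<exists>w :: 'g list \<Rightarrow> 'r. cycle G (Suc m) w \<and> f t - cobdry G m h t = pairing \<iota> f w"
    using ex_cochain_diff_cobdry_eq_pairing_cycle[OF G hom inj pid, of m f] by blast
  have "av (f t - cobdry G m h t) \<le> max 0 M" for t
  proof (cases "t \<in> tuples G (Suc m)")
    case True
    then show ?thesis
      using corr M by fastforce
  next
    case False
    then show ?thesis
      using f(1) by (simp add: cochain_def cobdry_def nonarch_abs_zero[OF av])
  qed
  with h show ?thesis
    unfolding bounded_cochain_def by blast
qed

theorem comparison_surj_if_homology_fg:
  fixes av :: "'k::field \<Rightarrow> real" and G :: "('g, 'b) monoid_scheme" and \<iota> :: "'r::idom \<Rightarrow> 'k"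
  assumes av: "nonarch_abs av" and G: "group G" and emb: "valuation_ring_embedding av \<iota>"
    and pid: "ideals_principal TYPE('r)" and fg: "homology_fg TYPE('r) G n"
  shows "comparison_surj av G n"
proof (cases n)
  case 0
  then show ?thesis
    using bounded_cochain_zero[OF av] by (auto simp: comparison_surj_def)
next
  case (Suc m)
  show ?thesis
    unfolding comparison_surj_def
  proof (intro allI impI)
    fix f :: "'g list \<Rightarrow> 'k"
    assume f: "cochain G n f \<and> cobdry G n f = (\<lambda>_. 0)"
    then obtain h where h: "cochain G m h" and bounded: "bounded_cochain av (\<lambda>t. f t - cobdry G m h t)"
      using ex_cochain_bounded_diff_cobdry[OF av G emb pid, of m f] fg Suc by blast
    have "cobdry G n (\<lambda>t. f t - cobdry G m h t) = (\<lambda>_. 0)"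
      using f Suc cobdry_cobdry[OF G, of m h] by (simp add: cobdry_diff fun_eq_iff)
    moreover have "cochain G n (\<lambda>t. f t - cobdry G m h t)"
      using f Suc by (simp add: cochain_def cobdry_def)
    ultimately show "\<exists>b. cochain G n b \<and> bounded_cochain av b \<and> cobdry G n b = (\<lambda>_. 0) \<and>
      (if n = 0 then f = b else \<exists>h. cochain G (n - 1) h \<and> (\<lambda>xs. f xs - b xs) = cobdry G (n - 1) h)"
      using h bounded Suc by (intro exI[of _ "\<lambda>t. f t - cobdry G m h t"]) auto
  qed
qed

section \<open>The coefficient rings\<close>

lemma of_int_eq_0_iff_CHAR_0: "CHAR('k::ring_1) = 0 \<Longrightarrow> (of_int a :: 'k) = 0 \<longleftrightarrow> a = 0"
  using of_int_eq_0_iff_char_dvd[where 'a = 'k, of a] by simp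

lemma valuation_ring_embedding_of_int:
  assumes "CHAR('k::field) = 0" "nonarch_abs av"
  shows "valuation_ring_embedding av (of_int :: int \<Rightarrow> 'k)"
  using nonarch_abs_of_int_le[OF assms(2)] of_int_eq_0_iff_CHAR_0[OF assms(1)]
  by (simp add: valuation_ring_embedding_def is_ring_hom_def)

text \<open>The library's \<open>of_rat\<close> would need the type class \<open>field_char_0\<close> on \<open>'k\<close>.\<close>
definition rat_to_field :: "rat \<Rightarrow> 'k::field" where
  "rat_to_field q = (case quotient_of q of (a, b) \<Rightarrow> of_int a / of_int b)"

lemma rat_eq_of_int_divide:
  fixes q :: rat
  obtains a b where "b \<noteq> 0" "q = of_int a / of_int b"
proof -
  obtain a b where ab: "quotient_of q = (a, b)"
    by (cases "quotient_of q")
  have "b \<noteq> 0"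
    using quotient_of_denom_pos[OF ab] by simp
  moreover have "q = of_int a / of_int b"
    by (rule quotient_of_div[OF ab])
  ultimately show ?thesis
    by (rule that)
qed

lemma rat_to_field_of_int_divide:
  assumes ch: "CHAR('k::field) = 0" and b: "b \<noteq> 0"
  shows "(rat_to_field (of_int a / of_int b) :: 'k) = of_int a / of_int b"
proof -
  obtain a' b' where q: "quotient_of (of_int a / of_int b) = (a', b')"
    by (cases "quotient_of (of_int a / of_int b)")
  have b': "b' > 0"
    using quotient_of_denom_pos[OF q] .
  have "(of_int a / of_int b :: rat) = of_int a' / of_int b'"
    using quotient_of_div[OF q] .
  then have "(of_int a * of_int b' :: rat) = of_int a' * of_int b"
    using b b' by (simp add: field_simps)
  then have "a * b' = a' * b"
    by (metis of_int_eq_iff of_int_mult)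
  then have "(of_int a * of_int b' :: 'k) = of_int a' * of_int b"
    by (metis of_int_mult)
  moreover have "(of_int b :: 'k) \<noteq> 0" "(of_int b' :: 'k) \<noteq> 0"
    using of_int_eq_0_iff_CHAR_0[OF ch] b b' by auto
  ultimately show ?thesis
    unfolding rat_to_field_def q by (simp add: field_simps)
qed

lemma is_ring_hom_rat_to_field:
  assumes ch: "CHAR('k::field) = 0"
  shows "is_ring_hom (rat_to_field :: rat \<Rightarrow> 'k)"
  unfolding is_ring_hom_def
proof (intro conjI allI)
  fix x y :: rat
  obtain a b c d where b: "b \<noteq> 0" and x: "x = of_int a / of_int b"
    and d: "d \<noteq> 0" and y: "y = of_int c / of_int d"
    using rat_eq_of_int_divide by metis
  have nz: "(of_int b :: 'k) \<noteq> 0" "(of_int d :: 'k) \<noteq> 0" "b * d \<noteq> 0"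
    using of_int_eq_0_iff_CHAR_0[OF ch] b d by auto
  have sum: "x + y = of_int (a * d + c * b) / of_int (b * d)"
    using b d by (simp add: x y field_simps)
  have "(rat_to_field (x + y) :: 'k) = of_int (a * d + c * b) / of_int (b * d)"
    unfolding sum by (rule rat_to_field_of_int_divide[OF ch nz(3)])
  also have "\<dots> = rat_to_field x + rat_to_field y"
    using nz by (simp add: x y rat_to_field_of_int_divide[OF ch b] rat_to_field_of_int_divide[OF ch d]
        field_simps)
  finally show "(rat_to_field (x + y) :: 'k) = rat_to_field x + rat_to_field y" .
  have prod: "x * y = of_int (a * c) / of_int (b * d)"
    by (simp add: x y)
  have "(rat_to_field (x * y) :: 'k) = of_int (a * c) / of_int (b * d)"
    unfolding prod by (rule rat_to_field_of_int_divide[OF ch nz(3)])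
  also have "\<dots> = rat_to_field x * rat_to_field y"
    by (simp add: x y rat_to_field_of_int_divide[OF ch b] rat_to_field_of_int_divide[OF ch d])
  finally show "(rat_to_field (x * y) :: 'k) = rat_to_field x * rat_to_field y" .
next
  show "(rat_to_field 1 :: 'k) = 1"
    using rat_to_field_of_int_divide[OF ch, of 1 1] by simp
qed

lemma nonarch_abs_of_int_eq_one:
  assumes "nonarch_abs av" "res_char av = 0" "b \<noteq> 0"
  shows "av (of_int b) = 1"
  using nonarch_abs_of_nat_eq_one[OF assms(1,2), of "nat \<bar>b\<bar>"] nonarch_abs_uminus[OF assms(1)] assms(3)
  by (cases "b \<ge> 0") simp_all

lemma valuation_ring_embedding_rat_to_field:
  assumes ch: "CHAR('k::field) = 0" and av: "nonarch_abs av" and res: "res_char av = 0"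
  shows "valuation_ring_embedding av (rat_to_field :: rat \<Rightarrow> 'k)"
proof -
  have "((rat_to_field q :: 'k) = 0 \<longrightarrow> q = 0) \<and> av (rat_to_field q) \<le> 1" for q
  proof -
    obtain a b where b: "b \<noteq> 0" and q: "q = of_int a / of_int b"
      using rat_eq_of_int_divide by metis
    then have "(rat_to_field q :: 'k) = of_int a / of_int b" "(of_int b :: 'k) \<noteq> 0"
      using rat_to_field_of_int_divide[OF ch b] of_int_eq_0_iff_CHAR_0[OF ch] by auto
    moreover have "av (of_int a / of_int b :: 'k) * av (of_int b) = av (of_int a)"
      using nonarch_abs_mult[OF av, of "of_int a / of_int b" "of_int b"] calculation(2) by simp
    ultimately show ?thesis
      using q nonarch_abs_of_int_eq_one[OF av res b] nonarch_abs_of_int_le[OF av, of a]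
        of_int_eq_0_iff_CHAR_0[OF ch, of a] by auto
  qed
  then show ?thesis
    using is_ring_hom_rat_to_field[OF ch] by (auto simp: valuation_ring_embedding_def)
qed

lemma CHAR_eq_of_card_eq_CHAR:
  assumes "CHAR('k::field) > 0" "card (UNIV :: 'r::{field,finite} set) = CHAR('k)"
  shows "CHAR('r) = CHAR('k)"
proof -
  have "prime CHAR('k)"
    using prime_CHAR_semidom[OF assms(1)] .
  moreover have "CHAR('r) dvd CHAR('k)"
    using CHAR_dvd_CARD[where 'a = 'r] assms(2) by simp
  ultimately show ?thesis
    using CHAR_not_1'[where 'a = 'r] by (metis One_nat_def prime_nat_iff)
qed

lemma ex_of_nat_eq:
  assumes "CHAR('k::field) > 0" "card (UNIV :: 'r::{field,finite} set) = CHAR('k)"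
  shows "\<exists>m. (of_nat m :: 'r) = r"
proof -
  let ?p = "CHAR('k)"
  have "inj_on (of_nat :: nat \<Rightarrow> 'r) {..<?p}"
    using CHAR_eq_of_card_eq_CHAR[OF assms]
    by (intro inj_onI) (auto simp: of_nat_eq_iff_cong_CHAR intro: cong_less_modulus_unique_nat)
  then have "card ((of_nat :: nat \<Rightarrow> 'r) ` {..<?p}) = card (UNIV :: 'r set)"
    using assms(2) by (simp add: card_image)
  then have "(of_nat :: nat \<Rightarrow> 'r) ` {..<?p} = UNIV"
    by (intro card_subset_eq) auto
  then show ?thesis
    by (metis UNIV_I imageE)
qed

definition prime_field_embedding :: "'r::{field,finite} \<Rightarrow> 'k::field" where
  "prime_field_embedding r = of_nat (SOME m. (of_nat m :: 'r) = r)"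

lemma prime_field_embedding_of_nat:
  assumes "CHAR('k::field) > 0" "card (UNIV :: 'r::{field,finite} set) = CHAR('k)"
  shows "(prime_field_embedding (of_nat m :: 'r) :: 'k) = of_nat m"
proof -
  have "(of_nat (SOME m'. (of_nat m' :: 'r) = of_nat m) :: 'r) = of_nat m"
    by (rule someI_ex) blast
  then show ?thesis
    using CHAR_eq_of_card_eq_CHAR[OF assms]
    by (simp add: prime_field_embedding_def of_nat_eq_iff_cong_CHAR)
qed

lemma valuation_ring_embedding_prime_field_embedding:
  assumes "CHAR('k::field) > 0" "card (UNIV :: 'r::{field,finite} set) = CHAR('k)"
    and av: "nonarch_abs (av :: 'k \<Rightarrow> real)"
  shows "valuation_ring_embedding av (prime_field_embedding :: 'r \<Rightarrow> 'k)"
  unfolding valuation_ring_embedding_def is_ring_hom_def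
proof (intro conjI allI impI)
  note of_nat_surj = ex_of_nat_eq[OF assms(1,2)] and emb_of_nat = prime_field_embedding_of_nat[OF assms(1,2)]
  fix a b :: 'r
  obtain x y where xy: "a = of_nat x" "b = of_nat y"
    using of_nat_surj by metis
  show "(prime_field_embedding (a + b) :: 'k) = prime_field_embedding a + prime_field_embedding b"
    and "(prime_field_embedding (a * b) :: 'k) = prime_field_embedding a * prime_field_embedding b"
    using emb_of_nat[of "x + y"] emb_of_nat[of "x * y"] by (simp_all add: xy emb_of_nat)
  show "av (prime_field_embedding a) \<le> 1"
    using nonarch_abs_of_nat_le[OF av] by (simp add: xy emb_of_nat)
  assume "(prime_field_embedding a :: 'k) = 0"
  then have "(of_nat x :: 'k) = 0"
    by (simp add: xy emb_of_nat)
  then show "a = 0"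
    using CHAR_eq_of_card_eq_CHAR[OF assms(1,2)] by (simp add: xy of_nat_eq_0_iff_char_dvd)
next
  show "(prime_field_embedding (1 :: 'r) :: 'k) = 1"
    using prime_field_embedding_of_nat[OF assms(1,2), of 1] by simp
qed

text \<open>Over \<open>\<int>\<close> the argument only needs \<open>CHAR(K) = 0\<close>.\<close>
theorem proposition8p12:
  fixes av :: "'k::field \<Rightarrow> real" and G :: "('g, 'b) monoid_scheme" and n :: nat
  assumes "nonarch_abs av" and "group G"
  shows "(CHAR('k) > 0 \<and> card (UNIV :: 'r set) = CHAR('k) \<and> homology_fg TYPE('r::{field,finite}) G n
            \<longrightarrow> comparison_surj av G n) \<and>
         (CHAR('k) = 0 \<and> res_char av = 0 \<and> homology_fg TYPE(rat) G n
            \<longrightarrow> comparison_surj av G n) \<and>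
         (CHAR('k) = 0 \<and> res_char av > 0 \<and> homology_fg TYPE(int) G n
            \<longrightarrow> comparison_surj av G n)"
proof (intro conjI impI)
  assume "CHAR('k) > 0 \<and> card (UNIV :: 'r set) = CHAR('k) \<and> homology_fg TYPE('r) G n"
  then show "comparison_surj av G n"
    using comparison_surj_if_homology_fg[OF assms _ ideals_principal_field]
      valuation_ring_embedding_prime_field_embedding[OF _ _ assms(1)] by blast
next
  assume "CHAR('k) = 0 \<and> res_char av = 0 \<and> homology_fg TYPE(rat) G n"
  then show "comparison_surj av G n"
    using comparison_surj_if_homology_fg[OF assms _ ideals_principal_field]
      valuation_ring_embedding_rat_to_field[OF _ assms(1)] by blast
next
  assume "CHAR('k) = 0 \<and> res_char av > 0 \<and> homology_fg TYPE(int) G n"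
  then show "comparison_surj av G n"
    using comparison_surj_if_homology_fg[OF assms _ ideals_principal_euclidean_ring]
      valuation_ring_embedding_of_int[OF _ assms(1)] by blast
qed

end
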